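(* Let $p$ be an odd prime and $\lambda$ a nonempty BG-partition. Then $a^*_\lambda$ is even if and only if $p\mid a^*_\lambda$.
   Context: Partitions: $\lambda=(\lambda_1\ge\lambda_2\ge\cdots)$ with finitely many nonzero parts; $l(\lambda)$ = number of nonzero parts; Young diagram $[\lambda]=\{(i,j): i\ge1, 1\le j\le\lambda_i\}$ ($i$ = row, increasing downward). $\lambda'$ is the conjugate; self-conjugate means $\lambda=\lambda'$. $k(\lambda)=\max\{i:\lambda_i\ge i\}$; hook length $h_{ij}=\lambda_i+\lambda'_j-i-j+1$. A BG-partition is a self-conjugate partition with $p\nmid h_{ii}$ for all $1\le i\le k(\lambda)$. Rim and $p$-rim: the rim is the set of nodes $(i,j)\in[\lambda]$ with $(i+1,j+1)\notin[\lambda]$. Label rim nodes $1,2,\dots$ along the rim path from $(1,\lambda_1)$ to $(l(\lambda),1)$. The first $p$-segment is the rim nodes labelled $1,\dots,p$ (or all if fewer). If the last node $(i,j)$ of a $p$-segment lies in the last row, stop; otherwise with $l$ the smallest label in row $i+1$ the next $p$-segment is the rim nodes labelled $l,\dots,l+p-1$ (or up to the last). The $p$-rim is the union of the $p$-segments. $p$-rim*: $U_\lambda=\{(i,j)\in p\text{-rim of }\lambda: i\le j\}$, $L_\lambda=\{(j,i):(i,j)\in U_\lambda\}$, $\mathrm{Rim}^*_p(\lambda)=U_\lambda\cup L_\lambda$, $a^*_\lambda=\#\mathrm{Rim}^*_p(\lambda)$. *)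

theory Defs
  imports Main "HOL-Computational_Algebra.Primes"
begin

text \<open>A partition is represented by the list of its nonzero parts
  (weakly decreasing, all positive). Rows are indexed from 1.\<close>

definition is_partition :: "nat list \<Rightarrow> bool" where
  "is_partition la \<longleftrightarrow> sorted (rev la) \<and> 0 \<notin> set la"

definition part :: "nat list \<Rightarrow> nat \<Rightarrow> nat" where
  "part la i = (if 1 \<le> i \<and> i \<le> length la then la ! (i - 1) else 0)"

definition len :: "nat list \<Rightarrow> nat" where
  "len la = length la"

definition diagram :: "nat list \<Rightarrow> (nat \<times> nat) set" where
  "diagram la = {(i, j). 1 \<le> i \<and> 1 \<le> j \<and> j \<le> part la i}"

definition conj_part :: "nat list \<Rightarrow> nat \<Rightarrow> nat" where
  "conj_part la j = card {i. 1 \<le> i \<and> i \<le> length la \<and> j \<le> part la i}"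

definition self_conjugate :: "nat list \<Rightarrow> bool" where
  "self_conjugate la \<longleftrightarrow> (\<forall>j\<ge>1. conj_part la j = part la j)"

definition kk :: "nat list \<Rightarrow> nat" where
  "kk la = Max {i. 1 \<le> i \<and> i \<le> part la i}"

text \<open>hook length (for nodes of the diagram, where it is positive)\<close>
definition hook :: "nat list \<Rightarrow> nat \<Rightarrow> nat \<Rightarrow> nat" where
  "hook la i j = part la i + conj_part la j + 1 - i - j"

definition BG_partition :: "nat \<Rightarrow> nat list \<Rightarrow> bool" where
  "BG_partition p la \<longleftrightarrow> self_conjugate la \<and>
     (\<forall>i. 1 \<le> i \<and> i \<le> kk la \<longrightarrow> \<not> p dvd hook la i i)"

definition rim :: "nat list \<Rightarrow> (nat \<times> nat) set" where
  "rim la = {(i, j) \<in> diagram la. (i + 1, j + 1) \<notin> diagram la}"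

text \<open>Label of a rim node: its position along the rim path from (1,lambda_1)
  to (l(lambda),1); the path runs along rows top to bottom, and within a row
  from right to left.\<close>
definition rim_label :: "nat list \<Rightarrow> nat \<times> nat \<Rightarrow> nat" where
  "rim_label la x = card {y \<in> rim la. fst y < fst x \<or> (fst y = fst x \<and> snd y > snd x)} + 1"

definition rim_node :: "nat list \<Rightarrow> nat \<Rightarrow> nat \<times> nat" where
  "rim_node la m = (THE x. x \<in> rim la \<and> rim_label la x = m)"

definition segment :: "nat \<Rightarrow> nat list \<Rightarrow> nat \<Rightarrow> (nat \<times> nat) set" where
  "segment p la s = {x \<in> rim la. s \<le> rim_label la x \<and> rim_label la x \<le> s + p - 1}"

definition segment_last :: "nat \<Rightarrow> nat list \<Rightarrow> nat \<Rightarrow> nat" where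
  "segment_last p la s = min (s + p - 1) (card (rim la))"

inductive_set seg_starts :: "nat \<Rightarrow> nat list \<Rightarrow> nat set" for p la where
  first: "1 \<in> seg_starts p la"
| next_seg: "s \<in> seg_starts p la \<Longrightarrow> fst (rim_node la (segment_last p la s)) = r \<Longrightarrow>
     r < len la \<Longrightarrow>
     Min (rim_label la ` {x \<in> rim la. fst x = r + 1}) \<in> seg_starts p la"

definition p_rim :: "nat \<Rightarrow> nat list \<Rightarrow> (nat \<times> nat) set" where
  "p_rim p la = (\<Union>s \<in> seg_starts p la. segment p la s)"

definition U_set :: "nat \<Rightarrow> nat list \<Rightarrow> (nat \<times> nat) set" where
  "U_set p la = {(i, j) \<in> p_rim p la. i \<le> j}"

definition L_set :: "nat \<Rightarrow> nat list \<Rightarrow> (nat \<times> nat) set" where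
  "L_set p la = {(j, i) | i j. (i, j) \<in> U_set p la}"

definition rim_star :: "nat \<Rightarrow> nat list \<Rightarrow> (nat \<times> nat) set" where
  "rim_star p la = U_set p la \<union> L_set p la"

definition a_star :: "nat \<Rightarrow> nat list \<Rightarrow> nat" where
  "a_star p la = card (rim_star p la)"

end

theory Submission
  imports Defs
begin

(* On a self-conjugate partition with n parts the contents j - i of the 2n - 1 rim nodes are
  exactly 1 - n, ..., n - 1, so the rim node (i, j) carries the label n + i - j. Hence U consists
  of the p-rim nodes of label at most n, L of their transposes, and U and L meet only in the
  diagonal rim node, of label n. The p-segments are pairwise disjoint label intervals, each
  beginning at the first rim node (i, lambda_i) of a row, and every segment ending before label n
  has exactly p nodes. If the diagonal node is not in the p-rim, a* = 2 |U| is therefore a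
  multiple of 2p. Otherwise the segment through it starts at some (i, lambda_i) with
  i <= lambda_i, and a* = 2 |U| - 1 is congruent to 2 (lambda_i - i + 1) - 1 = h_ii modulo 2p:
  a* is odd, and it is not divisible by p by the BG condition. *)

lemma part_antimono:
  assumes "is_partition la" "1 \<le> i" "i \<le> i'"
  shows "part la i' \<le> part la i"
proof (cases "i' \<le> length la")
  case True
  have "sorted (rev la)" using assms(1) by (simp add: is_partition_def)
  with True assms(2,3) show ?thesis
    using sorted_rev_nth_mono[of la "i - 1" "i' - 1"] by (simp add: part_def)
next
  case False
  then show ?thesis by (simp add: part_def)
qed

lemma part_pos_iff:
  assumes "is_partition la" "1 \<le> i"
  shows "0 < part la i \<longleftrightarrow> i \<le> length la"
proof -
  have "la ! (i - 1) \<noteq> 0" if "i \<le> length la"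
  proof -
    have "la ! (i - 1) \<in> set la" using that assms(2) by simp
    then show ?thesis using assms(1) by (metis is_partition_def)
  qed
  then show ?thesis using assms(2) by (auto simp: part_def)
qed

lemma le_part_iff_le_conj_part:
  assumes la: "is_partition la" and "1 \<le> i" "1 \<le> j"
  shows "j \<le> part la i \<longleftrightarrow> i \<le> conj_part la j"
proof -
  define A where "A = {i. 1 \<le> i \<and> i \<le> length la \<and> j \<le> part la i}"
  have A_iff: "a \<in> A \<longleftrightarrow> j \<le> part la a" if "1 \<le> a" for a
    using that \<open>1 \<le> j\<close> part_pos_iff[OF la that] by (auto simp: A_def)
  have "finite A" by (auto simp: A_def)
  show ?thesis
  proof
    assume "j \<le> part la i"
    then have "{1..i} \<subseteq> A"
      using A_iff part_antimono[OF la] by (meson atLeastAtMost_iff le_trans subsetI)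
    then have "card {1..i} \<le> card A" using \<open>finite A\<close> by (rule card_mono[rotated])
    then show "i \<le> conj_part la j" by (simp add: conj_part_def A_def)
  next
    assume i_le: "i \<le> conj_part la j"
    show "j \<le> part la i"
    proof (rule ccontr)
      assume "\<not> j \<le> part la i"
      have "A \<subseteq> {1..i - 1}"
      proof
        fix a assume "a \<in> A"
        then have "1 \<le> a" "j \<le> part la a" by (auto simp: A_def)
        with \<open>\<not> j \<le> part la i\<close> have "a < i"
          using part_antimono[OF la \<open>1 \<le> i\<close>, of a] by (meson le_trans not_le)
        with \<open>1 \<le> a\<close> show "a \<in> {1..i - 1}" by simp
      qed
      then have "card A \<le> i - 1" using card_mono[of "{1..i - 1}" A] by simp
      then show False using i_le \<open>1 \<le> i\<close> by (simp add: conj_part_def A_def)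
    qed
  qed
qed

lemma le_kk:
  assumes "1 \<le> i" "i \<le> part la i"
  shows "i \<le> kk la"
proof -
  have "{i. 1 \<le> i \<and> i \<le> part la i} \<subseteq> {..length la}"
    by (auto simp: part_def split: if_splits)
  then have "finite {i. 1 \<le> i \<and> i \<le> part la i}" by (rule finite_subset) simp
  with assms show ?thesis unfolding kk_def by (intro Max_ge) auto
qed

lemma mem_rim_iff:
  "(i, j) \<in> rim la \<longleftrightarrow> 1 \<le> i \<and> 1 \<le> j \<and> j \<le> part la i \<and> part la (i + 1) \<le> j"
  by (auto simp: rim_def diagram_def)

fun content :: "nat \<times> nat \<Rightarrow> int" where
  "content (i, j) = int j - int i"

lemma content_rim_less:
  assumes la: "is_partition la" and "(i, j) \<in> rim la" "(i', j') \<in> rim la" "i' < i"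
  shows "content (i, j) < content (i', j')"
proof (rule ccontr)
  assume "\<not> ?thesis"
  then have "j' + 1 \<le> part la i" using assms(2,4) by (simp add: mem_rim_iff)
  also have "\<dots> \<le> part la (i' + 1)" using part_antimono[OF la, of "i' + 1" i] assms(4) by simp
  finally show False using assms(3) by (simp add: mem_rim_iff)
qed

lemma rim_order_iff_content_less:
  assumes "is_partition la" "(i, j) \<in> rim la" "(i', j') \<in> rim la"
  shows "i' < i \<or> (i' = i \<and> j < j') \<longleftrightarrow> content (i, j) < content (i', j')"
  using content_rim_less[OF assms] content_rim_less[OF assms(1,3,2)]
  by (cases i i' rule: linorder_cases) auto

lemma inj_on_content_rim:
  assumes "is_partition la"
  shows "inj_on content (rim la)"
proof (rule inj_onI)
  fix x y assume "x \<in> rim la" "y \<in> rim la" "content x = content y"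
  moreover obtain i j i' j' where "x = (i, j)" "y = (i', j')" by force
  ultimately show "x = y"
    using rim_order_iff_content_less[OF assms, of i j i' j']
      rim_order_iff_content_less[OF assms, of i' j' i j] by auto
qed

lemma rim_label_eq_card_content_greater:
  assumes "is_partition la" "x \<in> rim la"
  shows "rim_label la x = card {y \<in> rim la. content x < content y} + 1"
proof -
  obtain i j where x: "x = (i, j)" by force
  have "{y \<in> rim la. fst y < i \<or> (fst y = i \<and> j < snd y)} = {y \<in> rim la. content x < content y}"
    using rim_order_iff_content_less[OF assms(1)] assms(2) x by fastforce
  then show ?thesis by (simp add: rim_label_def x)
qed

lemma card_disjoint_intervals_atMost:
  fixes S :: "nat set" and e :: "nat \<Rightarrow> nat"
  assumes "finite S" "1 \<le> p"
    and disjoint: "\<And>s s'. s \<in> S \<Longrightarrow> s' \<in> S \<Longrightarrow> s < s' \<Longrightarrow> e s < s'"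
    and full: "\<And>s. s \<in> S \<Longrightarrow> e s < h \<Longrightarrow> e s = s + p - 1"
  shows "card ((\<Union>s\<in>S. {s..e s}) \<inter> {..h}) =
    (\<Sum>s | s \<in> S \<and> s \<le> h. if h \<le> e s then h - s + 1 else p)"
proof -
  let ?T = "{s. s \<in> S \<and> s \<le> h}"
  have "(\<Union>s\<in>S. {s..e s}) \<inter> {..h} = (\<Union>s\<in>?T. {s..e s} \<inter> {..h})" by auto
  also have "card \<dots> = (\<Sum>s\<in>?T. card ({s..e s} \<inter> {..h}))"
  proof (rule card_UN_disjoint)
    show "finite ?T" using \<open>finite S\<close> by simp
    show "\<forall>s\<in>?T. \<forall>s'\<in>?T. s \<noteq> s' \<longrightarrow> {s..e s} \<inter> {..h} \<inter> ({s'..e s'} \<inter> {..h}) = {}"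
      using disjoint by (fastforce simp: neq_iff)
  qed simp
  also have "\<dots> = (\<Sum>s\<in>?T. if h \<le> e s then h - s + 1 else p)"
  proof (rule sum.cong)
    fix s assume s: "s \<in> ?T"
    show "card ({s..e s} \<inter> {..h}) = (if h \<le> e s then h - s + 1 else p)"
    proof (cases "h \<le> e s")
      case True
      then have "{s..e s} \<inter> {..h} = {s..h}" by auto
      then show ?thesis using True s by (simp add: Suc_diff_le)
    next
      case False
      then have "e s = s + p - 1" using full s by simp
      moreover have "{s..e s} \<inter> {..h} = {s..e s}" using False by auto
      ultimately show ?thesis using False \<open>1 \<le> p\<close> by simp
    qed
  qed simp
  finally show ?thesis .
qed

lemma p_rim_subset_rim: "p_rim p la \<subseteq> rim la"
  by (auto simp: p_rim_def segment_def)

lemma a_star_eq_card_U_set: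
  assumes "finite (p_rim p la)"
  shows "a_star p la = 2 * card (U_set p la) - card {x \<in> p_rim p la. fst x = snd x}"
proof -
  have L_eq: "L_set p la = prod.swap ` U_set p la" by (auto simp: L_set_def)
  have "U_set p la \<subseteq> p_rim p la" by (auto simp: U_set_def)
  then have "finite (U_set p la)" using assms by (rule finite_subset)
  moreover have "card (L_set p la) = card (U_set p la)"
    unfolding L_eq by (rule card_image) (metis inj_on_def swap_swap)
  moreover have "U_set p la \<inter> L_set p la = {x \<in> p_rim p la. fst x = snd x}"
    by (auto simp: U_set_def L_set_def)
  ultimately show ?thesis
    using card_Un_Int[of "U_set p la" "L_set p la"] L_eq
    by (simp add: a_star_def rim_star_def)
qed

locale self_conjugate_partition =
  fixes la :: "nat list"
  assumes is_partition: "is_partition la"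
    and nonempty: "la \<noteq> []"
    and self_conjugate: "self_conjugate la"
begin

abbreviation n :: nat where "n \<equiv> length la"

lemma le_part_iff_transpose: "1 \<le> i \<Longrightarrow> 1 \<le> j \<Longrightarrow> j \<le> part la i \<longleftrightarrow> i \<le> part la j"
  using le_part_iff_le_conj_part[OF is_partition] self_conjugate
  by (simp add: self_conjugate_def)

lemma part_1: "part la 1 = n"
proof (rule antisym)
  show "part la 1 \<le> n"
    using le_part_iff_transpose[of "part la 1" 1] part_pos_iff[OF is_partition, of "part la 1"]
    by (cases "part la 1 = 0") auto
  show "n \<le> part la 1"
    using le_part_iff_transpose[of 1 n] part_pos_iff[OF is_partition, of n] nonempty
    by (simp add: Suc_le_eq)
qed

lemma part_le_length: "part la i \<le> n"
  using part_antimono[OF is_partition, of 1 i] part_1 by (cases "i = 0") (auto simp: part_def)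

lemma hook_diagonal: "1 \<le> i \<Longrightarrow> hook la i i = 2 * part la i + 1 - 2 * i"
  using self_conjugate by (simp add: self_conjugate_def hook_def)

lemma rim_transpose: "(i, j) \<in> rim la \<Longrightarrow> (j, i) \<in> rim la"
  using le_part_iff_transpose[of i j] le_part_iff_transpose[of "i + 1" "j + 1"]
  by (auto simp: mem_rim_iff)

lemma rim_bounds: "(i, j) \<in> rim la \<Longrightarrow> 1 \<le> i \<and> i \<le> n \<and> 1 \<le> j \<and> j \<le> n"
  using part_pos_iff[OF is_partition, of i] part_le_length[of i] by (auto simp: mem_rim_iff)

lemma ex_rim_content_nonneg:
  assumes "d < n"
  shows "\<exists>i. (i, i + d) \<in> rim la"
proof -
  define A where "A = {a. 1 \<le> a \<and> a + d \<le> part la a}"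
  have "1 \<in> A" using assms part_1 by (simp add: A_def)
  have "A \<subseteq> {..n}"
    unfolding A_def using part_le_length by (auto intro: le_trans[OF le_add1] order.trans)
  then have "finite A" by (rule finite_subset) simp
  define a where "a = Max A"
  have "a \<in> A" unfolding a_def using \<open>finite A\<close> \<open>1 \<in> A\<close> by (intro Max_in) auto
  moreover have "a + 1 \<notin> A" using Max_ge[OF \<open>finite A\<close>, of "a + 1"] by (auto simp: a_def)
  ultimately have "(a, a + d) \<in> rim la" by (simp add: A_def mem_rim_iff)
  then show ?thesis ..
qed

lemma content_rim_image: "content ` rim la = {1 - int n..int n - 1}"
proof
  show "content ` rim la \<subseteq> {1 - int n..int n - 1}" using rim_bounds by force
next
  show "{1 - int n..int n - 1} \<subseteq> content ` rim la"
  proof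
    fix c :: int assume c: "c \<in> {1 - int n..int n - 1}"
    show "c \<in> content ` rim la"
    proof (cases "0 \<le> c")
      case True
      with c have "nat c < n" by auto
      then obtain i where "(i, i + nat c) \<in> rim la" using ex_rim_content_nonneg by blast
      moreover have "content (i, i + nat c) = c" using True by simp
      ultimately show ?thesis by (metis image_eqI)
    next
      case False
      with c have "nat (- c) < n" by auto
      then obtain i where "(i, i + nat (- c)) \<in> rim la" using ex_rim_content_nonneg by blast
      then have "(i + nat (- c), i) \<in> rim la" by (rule rim_transpose)
      moreover have "content (i + nat (- c), i) = c" using False by simp
      ultimately show ?thesis by (metis image_eqI)
    qed
  qed
qed

lemma rim_label_content:
  assumes "x \<in> rim la"
  shows "int (rim_label la x) = int n - content x"
proof -
  have bounds: "content x \<in> {1 - int n..int n - 1}" using assms content_rim_image by blast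
  have "content ` {y \<in> rim la. content x < content y} = {c \<in> content ` rim la. content x < c}"
    by blast
  also have "\<dots> = {content x<..int n - 1}" using bounds unfolding content_rim_image by auto
  finally have image: "content ` {y \<in> rim la. content x < content y} = {content x<..int n - 1}" .
  have "inj_on content {y \<in> rim la. content x < content y}"
    using inj_on_content_rim[OF is_partition] by (rule inj_on_subset) auto
  then have "card {y \<in> rim la. content x < content y} = nat (int n - 1 - content x)"
    using image card_image by fastforce
  then show ?thesis
    using rim_label_eq_card_content_greater[OF is_partition assms] bounds by simp
qed

lemma rim_label_eq: "(i, j) \<in> rim la \<Longrightarrow> rim_label la (i, j) = n + i - j"
  using rim_label_content[of "(i, j)"] rim_bounds[of i j] by simp

lemma bij_betw_rim_label: "bij_betw (rim_label la) (rim la) {1..2 * n - 1}"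
proof (rule bij_betw_imageI)
  show "inj_on (rim_label la) (rim la)"
  proof (rule inj_onI)
    fix x y assume "x \<in> rim la" "y \<in> rim la" "rim_label la x = rim_label la y"
    then have "content x = content y"
      using rim_label_content[OF \<open>x \<in> rim la\<close>] rim_label_content[OF \<open>y \<in> rim la\<close>] by simp
    then show "x = y" using inj_on_content_rim[OF is_partition] \<open>x \<in> rim la\<close> \<open>y \<in> rim la\<close>
      by (simp add: inj_on_eq_iff)
  qed
  show "rim_label la ` rim la = {1..2 * n - 1}"
  proof
    show "rim_label la ` rim la \<subseteq> {1..2 * n - 1}"
    proof clarify
      fix x assume "x \<in> rim la"
      then have "content x \<in> {1 - int n..int n - 1}" using content_rim_image by blast
      then show "rim_label la x \<in> {1..2 * n - 1}"
        using rim_label_content[OF \<open>x \<in> rim la\<close>] by simp arith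
    qed
  next
    show "{1..2 * n - 1} \<subseteq> rim_label la ` rim la"
    proof
      fix m assume "m \<in> {1..2 * n - 1}"
      then have "int n - int m \<in> content ` rim la" using content_rim_image by auto
      then obtain x where "x \<in> rim la" "content x = int n - int m" by auto
      then have "rim_label la x = m" using rim_label_content[OF \<open>x \<in> rim la\<close>] by simp
      with \<open>x \<in> rim la\<close> show "m \<in> rim_label la ` rim la" by blast
    qed
  qed
qed

lemma card_rim: "card (rim la) = 2 * n - 1"
  using bij_betw_same_card[OF bij_betw_rim_label] by simp

lemma rim_node:
  assumes "m \<in> {1..2 * n - 1}"
  shows "rim_node la m \<in> rim la" "rim_label la (rim_node la m) = m"
proof -
  obtain x where "x \<in> rim la" "rim_label la x = m"
    using bij_betw_imp_surj_on[OF bij_betw_rim_label] assms by (metis imageE)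
  moreover have "inj_on (rim_label la) (rim la)"
    using bij_betw_rim_label by (rule bij_betw_imp_inj_on)
  ultimately have "\<exists>!x. x \<in> rim la \<and> rim_label la x = m"
    by (metis inj_on_eq_iff)
  then have "rim_node la m \<in> rim la \<and> rim_label la (rim_node la m) = m"
    unfolding rim_node_def by (rule theI')
  then show "rim_node la m \<in> rim la" "rim_label la (rim_node la m) = m" by auto
qed

lemma rim_label_le_imp_row_le:
  assumes "x \<in> rim la" "y \<in> rim la" "rim_label la x \<le> rim_label la y"
  shows "fst x \<le> fst y"
proof (rule ccontr)
  obtain i j i' j' where xy: "x = (i, j)" "y = (i', j')" by force
  assume "\<not> fst x \<le> fst y"
  then have "content x < content y" using content_rim_less[OF is_partition] assms xy by simp
  then show False
    using assms(3) rim_label_content[OF assms(1)] rim_label_content[OF assms(2)] by simp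
qed

end

locale self_conjugate_partition_segments = self_conjugate_partition +
  fixes p :: nat
  assumes p_pos: "1 \<le> p"
begin

abbreviation seg_end :: "nat \<Rightarrow> nat" where
  "seg_end s \<equiv> segment_last p la s"

abbreviation row_start :: "nat \<Rightarrow> nat" where
  "row_start i \<equiv> n + i - part la i"

abbreviation next_start :: "nat \<Rightarrow> nat" where
  "next_start s \<equiv> row_start (fst (rim_node la (seg_end s)) + 1)"

lemma seg_end_eq: "seg_end s = min (s + p - 1) (2 * n - 1)"
  by (simp add: segment_last_def card_rim)

lemma seg_end_in_range: "1 \<le> s \<Longrightarrow> seg_end s \<in> {1..2 * n - 1}"
proof -
  assume "1 \<le> s"
  moreover have "1 \<le> 2 * n - 1" using nonempty by (cases la) auto
  ultimately show ?thesis using p_pos by (auto simp: seg_end_eq min_def)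
qed

lemma seg_end_mono: "s \<le> s' \<Longrightarrow> seg_end s \<le> seg_end s'"
  by (simp add: seg_end_eq)

lemma row_start_rim:
  assumes "1 \<le> i" "i \<le> n"
  shows "(i, part la i) \<in> rim la" "rim_label la (i, part la i) = row_start i"
proof -
  show "(i, part la i) \<in> rim la"
    using assms part_pos_iff[OF is_partition, of i] part_antimono[OF is_partition, of i "i + 1"]
    by (simp add: mem_rim_iff)
  then show "rim_label la (i, part la i) = row_start i" by (rule rim_label_eq)
qed

lemma row_start_ge: "i \<le> row_start i"
  using part_le_length[of i] by simp

lemma row_start_mono:
  assumes "1 \<le> i" "i \<le> i'"
  shows "row_start i \<le> row_start i'"
  using part_antimono[OF is_partition, of i i'] part_le_length[of i] assms by simp

lemma rim_label_between_row_starts: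
  assumes "(i, j) \<in> rim la"
  shows "row_start i \<le> rim_label la (i, j) \<and> rim_label la (i, j) < row_start (i + 1)"
  using assms rim_label_eq[OF assms] rim_bounds[OF assms] part_le_length[of "i + 1"]
  by (auto simp: mem_rim_iff)

lemma Min_row_labels:
  assumes "1 \<le> i" "i \<le> n"
  shows "Min (rim_label la ` {x \<in> rim la. fst x = i}) = row_start i"
proof (rule Min_eqI)
  show "finite (rim_label la ` {x \<in> rim la. fst x = i})"
    using bij_betw_finite[OF bij_betw_rim_label] by simp
  show "row_start i \<le> m" if "m \<in> rim_label la ` {x \<in> rim la. fst x = i}" for m
    using that rim_label_between_row_starts by auto
  show "row_start i \<in> rim_label la ` {x \<in> rim la. fst x = i}"
    using row_start_rim[OF assms] by (metis (mono_tags, lifting) fst_conv image_eqI mem_Collect_eq)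
qed

lemma seg_starts_cases:
  assumes "s \<in> seg_starts p la"
  obtains "s = 1"
  | s' where "s' \<in> seg_starts p la" "s = next_start s'"
  using assms
proof cases
  case first
  then show ?thesis using that(1) by simp
next
  case (next_seg s' r)
  then have "s = next_start s'" using Min_row_labels[of "r + 1"] by (simp add: len_def)
  then show ?thesis using that(2) next_seg(2) by blast
qed

lemma seg_starts_induct[consumes 1, case_names first next_start]:
  assumes "s \<in> seg_starts p la" "Q 1"
    and "\<And>s. s \<in> seg_starts p la \<Longrightarrow> Q s \<Longrightarrow> Q (next_start s)"
  shows "Q s"
  using assms(1)
proof induction
  case first
  then show ?case by (rule assms(2))
next
  case (next_seg s r)
  then show ?case using assms(3)[of s] Min_row_labels[of "r + 1"] by (simp add: len_def)
qed

lemma seg_start_row_start: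
  "s \<in> seg_starts p la \<Longrightarrow> \<exists>i. 1 \<le> i \<and> i \<le> n \<and> s = row_start i"
proof (induction rule: seg_starts.induct)
  case first
  then show ?case using part_1 nonempty by (intro exI[of _ 1]) (simp add: Suc_le_eq)
next
  case (next_seg s r)
  then show ?case using Min_row_labels[of "r + 1"] by (intro exI[of _ "r + 1"]) (simp add: len_def)
qed

lemma seg_start_range:
  assumes "s \<in> seg_starts p la"
  shows "s \<in> {1..2 * n - 1}"
proof -
  obtain i where "1 \<le> i" "i \<le> n" "s = row_start i" using seg_start_row_start[OF assms] by blast
  moreover from this have "0 < part la i" using part_pos_iff[OF is_partition] by blast
  ultimately show ?thesis using row_start_ge[of i] by simp
qed

lemma seg_end_less_next_start: "1 \<le> s \<Longrightarrow> seg_end s < next_start s"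
  using rim_node[OF seg_end_in_range] rim_label_between_row_starts
  by (metis prod.collapse)

lemma next_start_mono:
  assumes "1 \<le> s" "s \<le> s'"
  shows "next_start s \<le> next_start s'"
proof -
  have "fst (rim_node la (seg_end s)) \<le> fst (rim_node la (seg_end s'))"
    using assms rim_node[OF seg_end_in_range] seg_end_mono
    by (intro rim_label_le_imp_row_le) auto
  then show ?thesis by (intro row_start_mono) simp_all
qed

lemma next_start_le_seg_start:
  assumes "s' \<in> seg_starts p la" "1 \<le> s" "seg_end s < s'"
  shows "next_start s \<le> s'"
proof -
  obtain i where i: "1 \<le> i" "i \<le> n" "s' = row_start i"
    using seg_start_row_start[OF assms(1)] by blast
  obtain r j where rj: "rim_node la (seg_end s) = (r, j)" by force
  have "(r, j) \<in> rim la" "rim_label la (r, j) = seg_end s"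
    using rim_node[OF seg_end_in_range[OF assms(2)]] rj by auto
  then have "row_start r < row_start i"
    using rim_label_between_row_starts[of r j] assms(3) i(3) by simp
  then have "\<not> i \<le> r" using row_start_mono[OF i(1), of r] by (meson leD)
  then have "r + 1 \<le> i" by simp
  then show ?thesis using rj i(3) row_start_mono[of "r + 1" i] by simp
qed

lemma seg_starts_disjoint:
  assumes "s0 \<in> seg_starts p la" "s \<in> seg_starts p la" "s0 < s"
  shows "seg_end s0 < s"
  using assms
proof (induction s0 arbitrary: s rule: seg_starts_induct)
  case first
  from first.prems(1) show ?case
  proof (cases rule: seg_starts_cases)
    case 1
    then show ?thesis using first.prems(2) by simp
  next
    case (2 s')
    have "seg_end 1 \<le> seg_end s'" using seg_start_range[OF 2(1)] by (intro seg_end_mono) simp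
    also have "\<dots> < next_start s'"
      using seg_start_range[OF 2(1)] by (intro seg_end_less_next_start) simp
    finally show ?thesis using 2(2) by simp
  qed
next
  case (next_start s0)
  from next_start.prems(1) show ?case
  proof (cases rule: seg_starts_cases)
    case 1
    then show ?thesis
      using next_start.prems(2) row_start_ge[of "fst (rim_node la (seg_end s0)) + 1"] by simp
  next
    case (2 s')
    have "1 \<le> s0" "1 \<le> s'" using seg_start_range next_start.hyps 2(1) by auto
    have "s0 < s'"
      using next_start_mono[OF \<open>1 \<le> s'\<close>, of s0] next_start.prems(2) 2(2) by (cases "s' \<le> s0") auto
    then have "seg_end s0 < s'" using next_start.IH 2(1) by blast
    then have "next_start s0 \<le> s'" using next_start_le_seg_start 2(1) \<open>1 \<le> s0\<close> by blast
    then have "seg_end (next_start s0) \<le> seg_end s'" by (rule seg_end_mono)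
    also have "\<dots> < next_start s'" using \<open>1 \<le> s'\<close> by (rule seg_end_less_next_start)
    finally show ?thesis using 2(2) by simp
  qed
qed

lemma rim_label_segment:
  assumes "1 \<le> s"
  shows "rim_label la ` segment p la s = {s..seg_end s}"
proof
  show "rim_label la ` segment p la s \<subseteq> {s..seg_end s}"
    using bij_betw_imp_surj_on[OF bij_betw_rim_label] by (force simp: segment_def seg_end_eq)
  show "{s..seg_end s} \<subseteq> rim_label la ` segment p la s"
  proof
    fix m assume "m \<in> {s..seg_end s}"
    then have "m \<in> {1..2 * n - 1}" "s \<le> m" "m \<le> s + p - 1"
      using assms by (auto simp: seg_end_eq)
    then have "rim_node la m \<in> segment p la s" "rim_label la (rim_node la m) = m"
      using rim_node by (auto simp: segment_def)
    then show "m \<in> rim_label la ` segment p la s" by (metis image_eqI)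
  qed
qed

abbreviation p_rim_labels :: "nat set" where
  "p_rim_labels \<equiv> rim_label la ` p_rim p la"

lemma p_rim_labels_eq: "p_rim_labels = (\<Union>s\<in>seg_starts p la. {s..seg_end s})"
  unfolding p_rim_def image_UN using seg_start_range rim_label_segment by simp

lemma card_p_rim_labels_atMost:
  "card (p_rim_labels \<inter> {..n}) =
    (\<Sum>s | s \<in> seg_starts p la \<and> s \<le> n. if n \<le> seg_end s then n - s + 1 else p)"
  unfolding p_rim_labels_eq
proof (rule card_disjoint_intervals_atMost[OF _ p_pos seg_starts_disjoint])
  show "finite (seg_starts p la)"
    using seg_start_range by (meson finite_atLeastAtMost finite_subset subsetI)
  show "seg_end s = s + p - 1" if "seg_end s < n" for s
    using that by (simp add: seg_end_eq min_def split: if_splits)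
qed

lemma card_rim_label_image: "A \<subseteq> rim la \<Longrightarrow> card (rim_label la ` A) = card A"
  using bij_betw_imp_inj_on[OF bij_betw_rim_label] by (metis card_image inj_on_subset)

lemma a_star_eq_card_p_rim_labels:
  "a_star p la = 2 * card (p_rim_labels \<inter> {..n}) - card (p_rim_labels \<inter> {n})"
proof -
  have le_n_iff: "fst x \<le> snd x \<longleftrightarrow> rim_label la x \<le> n"
    and eq_n_iff: "fst x = snd x \<longleftrightarrow> rim_label la x = n" if "x \<in> rim la" for x
    using rim_label_content[OF that] by (cases x; simp; linarith)+
  have U_eq: "U_set p la = {x \<in> p_rim p la. rim_label la x \<le> n}"
    using p_rim_subset_rim[of p la] le_n_iff by (auto simp: U_set_def)
  have diagonal_eq: "{x \<in> p_rim p la. fst x = snd x} = {x \<in> p_rim p la. rim_label la x = n}"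
    using p_rim_subset_rim[of p la] eq_n_iff by auto
  have "p_rim_labels \<inter> {..n} = rim_label la ` U_set p la"
    unfolding U_eq by auto
  moreover have "p_rim_labels \<inter> {n} = rim_label la ` {x \<in> p_rim p la. fst x = snd x}"
    unfolding diagonal_eq by auto (metis image_eqI)
  moreover have "finite (p_rim p la)"
    using p_rim_subset_rim bij_betw_finite[OF bij_betw_rim_label]
    by (metis finite_atLeastAtMost finite_subset)
  moreover have "U_set p la \<subseteq> rim la" "{x \<in> p_rim p la. fst x = snd x} \<subseteq> rim la"
    using p_rim_subset_rim[of p la] by (auto simp: U_set_def)
  ultimately show ?thesis using a_star_eq_card_U_set card_rim_label_image by simp
qed

lemma a_star_if_diagonal_not_in_p_rim:
  assumes "n \<notin> p_rim_labels"
  shows "\<exists>q. a_star p la = 2 * p * q"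
proof -
  have "(\<Sum>s | s \<in> seg_starts p la \<and> s \<le> n. if n \<le> seg_end s then n - s + 1 else p) =
      (\<Sum>s | s \<in> seg_starts p la \<and> s \<le> n. p)"
    using assms unfolding p_rim_labels_eq by (intro sum.cong) auto
  then have "card (p_rim_labels \<inter> {..n}) = p * card {s. s \<in> seg_starts p la \<and> s \<le> n}"
    using card_p_rim_labels_atMost by simp
  moreover have "p_rim_labels \<inter> {n} = {}" using assms by auto
  ultimately show ?thesis using a_star_eq_card_p_rim_labels by auto
qed

lemma a_star_if_diagonal_in_p_rim:
  assumes "n \<in> p_rim_labels"
  obtains i q where "1 \<le> i" "i \<le> part la i" "a_star p la = 2 * p * q + hook la i i"
proof -
  let ?T = "{s. s \<in> seg_starts p la \<and> s \<le> n}"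
  let ?f = "\<lambda>s. if n \<le> seg_end s then n - s + 1 else p"
  obtain s1 where s1: "s1 \<in> seg_starts p la" "s1 \<le> n" "n \<le> seg_end s1"
    using assms unfolding p_rim_labels_eq by auto
  have "?f s = p" if "s \<in> ?T - {s1}" for s
    using that s1 seg_starts_disjoint[of s s1] seg_starts_disjoint[of s1 s] by (cases "s < s1") auto
  then have "sum ?f ?T = p * card (?T - {s1}) + (n - s1 + 1)"
    using sum.remove[of ?T s1 ?f] s1 seg_start_range by (simp add: finite_subset algebra_simps)
  then have q: "card (p_rim_labels \<inter> {..n}) = p * card (?T - {s1}) + (n - s1 + 1)"
    using card_p_rim_labels_atMost by simp
  obtain i where i: "1 \<le> i" "i \<le> n" "s1 = row_start i"
    using seg_start_row_start[OF s1(1)] by blast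
  have "i \<le> part la i" "part la i \<le> n" using i s1(2) part_le_length[of i] by auto
  then have "hook la i i = 2 * (n - s1 + 1) - 1" using hook_diagonal[OF i(1)] i(3) by simp
  moreover have "p_rim_labels \<inter> {n} = {n}" using assms by auto
  ultimately have "a_star p la = 2 * p * card (?T - {s1}) + hook la i i"
    using a_star_eq_card_p_rim_labels q s1(2) by simp
  with i(1) \<open>i \<le> part la i\<close> show ?thesis by (rule that)
qed

end

theorem lemma3p20:
  fixes p :: nat and la :: "nat list"
  assumes "prime p" and "odd p"
    and "is_partition la" and "la \<noteq> []"
    and "BG_partition p la"
  shows "even (a_star p la) \<longleftrightarrow> p dvd a_star p la"
proof -
  interpret self_conjugate_partition_segments la p
    using assms prime_ge_1_nat by unfold_locales (auto simp: BG_partition_def)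
  show ?thesis
  proof (cases "length la \<in> p_rim_labels")
    case False
    then obtain q where "a_star p la = 2 * p * q" using a_star_if_diagonal_not_in_p_rim by blast
    then show ?thesis by simp
  next
    case True
    then obtain i q where i: "1 \<le> i" "i \<le> part la i"
      and a_star: "a_star p la = 2 * p * q + hook la i i"
      by (rule a_star_if_diagonal_in_p_rim)
    have "\<not> p dvd hook la i i"
      using assms(5) i le_kk[OF i] by (simp add: BG_partition_def)
    then have "\<not> p dvd a_star p la" unfolding a_star by (simp add: dvd_add_right_iff)
    moreover have "odd (a_star p la)" unfolding a_star using hook_diagonal[OF i(1)] i(2) by simp
    ultimately show ?thesis by simp
  qed
qed

end
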